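(* For any $c\neq0$, the $\mu$HS equation has a one-parameter family of smooth periodic traveling waves of period one and a one-parameter family of cusped periodic traveling waves of period one moving with speed $c$. That is, there are one-parameter families of $1$-periodic $\varphi\in H^1_{loc}(\mathbb{R})$ (smooth in the first family; smooth except for cusps at the points where $\varphi=c$ in the second) such that, with $\mu:=\int_0^1\varphi\,dx$, for some $a\in\mathbb{R}$, $$\varphi_x^2=-4\mu\varphi+\big((\varphi-c)^2\big)_{xx}+a\quad\text{in }\mathcal{D}'(\mathbb{R}),$$ so that $u(t,x)=\varphi(x-ct)$ is a traveling wave of $-u_{txx}=-2\mu(u)u_x+2u_xu_{xx}+uu_{xxx}$ on $S^1=\mathbb{R}/\mathbb{Z}$.
   Context: $\mu(u)=\int_{S^1}u\,dx$ for $u$ on $S^1=\mathbb{R}/\mathbb{Z}$. A traveling wave of speed $c$ is a solution of the form $u(t,x)=\varphi(x-ct)$, understood weakly via the displayed distributional equation. *)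

theory Defs
  imports "HOL-Analysis.Analysis"
begin

definition smooth_on :: "real set \<Rightarrow> (real \<Rightarrow> real) \<Rightarrow> bool" where
  "smooth_on S f \<longleftrightarrow> (\<forall>n. \<forall>x\<in>S. ((deriv ^^ n) f) differentiable (at x))"

definition test_function :: "(real \<Rightarrow> real) \<Rightarrow> bool" where
  "test_function \<psi> \<longleftrightarrow> smooth_on UNIV \<psi> \<and> bounded {x. \<psi> x \<noteq> 0}"

text \<open>g is a weak derivative of phi in L2_loc, phi being the (continuous) H1_loc representative.\<close>
definition H1loc_weak_deriv :: "(real \<Rightarrow> real) \<Rightarrow> (real \<Rightarrow> real) \<Rightarrow> bool" where
  "H1loc_weak_deriv \<phi> g \<longleftrightarrow>
     (\<forall>x y. x \<le> y \<longrightarrow> (g has_integral (\<phi> y - \<phi> x)) {x..y}) \<and>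
     (\<forall>x y. (\<lambda>t. (g t)\<^sup>2) integrable_on {x..y})"

definition periodic1 :: "(real \<Rightarrow> real) \<Rightarrow> bool" where
  "periodic1 \<phi> \<longleftrightarrow> (\<forall>x. \<phi> (x + 1) = \<phi> x)"

definition muHS_traveling_wave :: "real \<Rightarrow> (real \<Rightarrow> real) \<Rightarrow> bool" where
  "muHS_traveling_wave c \<phi> \<longleftrightarrow> periodic1 \<phi> \<and>
     (\<exists>g a. H1loc_weak_deriv \<phi> g \<and>
        (\<forall>\<psi>. test_function \<psi> \<longrightarrow>
           integral UNIV (\<lambda>x. (g x)\<^sup>2 * \<psi> x) =
             integral UNIV (\<lambda>x. (- 4 * integral {0..1} \<phi> * \<phi> x + a) * \<psi> x)
           + integral UNIV (\<lambda>x. (\<phi> x - c)\<^sup>2 * deriv (deriv \<psi>) x)))"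

definition cusp_at :: "(real \<Rightarrow> real) \<Rightarrow> real \<Rightarrow> bool" where
  "cusp_at \<phi> x0 \<longleftrightarrow>
     (filterlim (deriv \<phi>) at_top (at_left x0) \<and> filterlim (deriv \<phi>) at_bot (at_right x0)) \<or>
     (filterlim (deriv \<phi>) at_bot (at_left x0) \<and> filterlim (deriv \<phi>) at_top (at_right x0))"

definition smooth_wave :: "real \<Rightarrow> (real \<Rightarrow> real) \<Rightarrow> bool" where
  "smooth_wave c \<phi> \<longleftrightarrow> muHS_traveling_wave c \<phi> \<and> smooth_on UNIV \<phi> \<and> (\<exists>x y. \<phi> x \<noteq> \<phi> y)"

definition cusped_wave :: "real \<Rightarrow> (real \<Rightarrow> real) \<Rightarrow> bool" where
  "cusped_wave c \<phi> \<longleftrightarrow> muHS_traveling_wave c \<phi> \<and> smooth_on {x. \<phi> x \<noteq> c} \<phi> \<and>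
     {x. \<phi> x = c} \<noteq> {} \<and> (\<forall>x0. \<phi> x0 = c \<longrightarrow> cusp_at \<phi> x0)"

definition one_param_family :: "((real \<Rightarrow> real) \<Rightarrow> bool) \<Rightarrow> bool" where
  "one_param_family P \<longleftrightarrow> (\<exists>p q. \<exists>F :: real \<Rightarrow> real \<Rightarrow> real. (p::real) < q \<and>
     (\<forall>s\<in>{p<..<q}. P (F s)) \<and>
     (\<forall>s\<in>{p<..<q}. \<forall>t\<in>{p<..<q}. s \<noteq> t \<longrightarrow> \<not> (\<exists>d. \<forall>x. F s x = F t (x + d))))"

end

theory Submission
  imports Defs "HOL-Real_Asymp.Real_Asymp"
begin

(* Writing phi = c + lam * psi, the traveling-wave equation is solved by a profile that is
   explicit in an angle variable theta:  psi = 1 - k cos theta, where x as a function of theta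
   is the primitive of  h(theta) = (1 - k cos theta) / sqrt (1 - k cos theta + beta), rescaled so
   that theta advances by 2 pi over one unit of x; lam is fixed so that the mean
   mu = int_0^1 phi takes the value -lam P^2/2 required by the equation.
   * For 0 < k < 1, beta = 0 the function h is positive, theta is a smooth diffeomorphism and phi
     is a smooth wave; k is recovered from the translation invariants min |phi - c| and
     max |phi - c|, so distinct k give waves that are not translates of each other.
   * For k = 1, beta > 0 the function h vanishes at 2 pi Z, phi - c vanishes exactly at the
     integers, and there phi_x behaves like a multiple of cot(theta/2): a cusp.  beta is recovered
     from max |phi - c|, the sign of lam and the slopes of phi at two levels. *)

section \<open>Iterated differentiability\<close>

text \<open>smooth_upto n S f: the derivatives of f of order 0..n are all differentiable on S.
  Smoothness is the conjunction over all n; this inductive form is closed under the usual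
  operations.\<close>
fun smooth_upto :: "nat \<Rightarrow> real set \<Rightarrow> (real \<Rightarrow> real) \<Rightarrow> bool" where
  "smooth_upto 0 S f = (\<forall>x\<in>S. f differentiable at x)"
| "smooth_upto (Suc n) S f = ((\<forall>x\<in>S. f differentiable at x) \<and> smooth_upto n S (deriv f))"

lemma smooth_upto_iff:
  "smooth_upto n S f \<longleftrightarrow> (\<forall>k\<le>n. \<forall>x\<in>S. ((deriv ^^ k) f) differentiable (at x))"
proof (induction n arbitrary: f)
  case 0 then show ?case by simp
next
  case (Suc n)
  have shift: "(deriv ^^ Suc k) f = (deriv ^^ k) (deriv f)" for k
    by (simp add: funpow_Suc_right del: funpow.simps)
  show ?case
  proof
    assume h: "smooth_upto (Suc n) S f"
    show "\<forall>k\<le>Suc n. \<forall>x\<in>S. (deriv ^^ k) f differentiable at x"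
    proof (intro allI impI)
      fix k assume "k \<le> Suc n"
      then show "\<forall>x\<in>S. (deriv ^^ k) f differentiable at x"
        using h Suc[of "deriv f"] shift by (cases k) auto
    qed
  next
    assume h: "\<forall>k\<le>Suc n. \<forall>x\<in>S. (deriv ^^ k) f differentiable at x"
    have "\<forall>k\<le>n. \<forall>x\<in>S. (deriv ^^ k) (deriv f) differentiable at x"
      using h shift by (metis Suc_le_mono)
    then show "smooth_upto (Suc n) S f" using h Suc[of "deriv f"] by force
  qed
qed

lemma smooth_on_iff_smooth_upto: "smooth_on S f \<longleftrightarrow> (\<forall>n. smooth_upto n S f)"
  unfolding smooth_on_def smooth_upto_iff by blast

lemma smooth_upto_has_deriv:
  "smooth_upto n S f \<Longrightarrow> x \<in> S \<Longrightarrow> (f has_real_derivative deriv f x) (at x)"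
  by (cases n) (auto simp: DERIV_deriv_iff_real_differentiable)

lemma smooth_upto_Suc_imp: "smooth_upto (Suc n) S f \<Longrightarrow> smooth_upto n S f"
  by (induction n arbitrary: f) auto

lemma smooth_upto_subset: "smooth_upto n S f \<Longrightarrow> T \<subseteq> S \<Longrightarrow> smooth_upto n T f"
  by (induction n arbitrary: f) auto

lemma smooth_upto_cong:
  assumes "open S" "\<And>x. x \<in> S \<Longrightarrow> f x = g x" "smooth_upto n S f"
  shows "smooth_upto n S g"
  using assms(2,3)
proof (induction n arbitrary: f g)
  case 0
  then show ?case
    using assms(1) unfolding differentiable_def smooth_upto.simps
    by (metis has_derivative_transform_within_open)
next
  case (Suc n)
  have "g differentiable at x" if "x \<in> S" for x
    using Suc.prems that assms(1) unfolding differentiable_def smooth_upto.simps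
    by (metis has_derivative_transform_within_open)
  moreover have "deriv f x = deriv g x" if "x \<in> S" for x
    by (rule deriv_cong_ev) (use that assms(1) Suc.prems in \<open>auto simp: eventually_nhds\<close>)
  ultimately show ?case using Suc by auto
qed

lemma smooth_upto_const: "smooth_upto n S (\<lambda>x. a)"
proof (induction n arbitrary: a)
  case (Suc n)
  have "deriv (\<lambda>x. a) = (\<lambda>x. 0)" by (rule ext) simp
  then show ?case using Suc by simp
qed simp

lemma smooth_upto_id: "smooth_upto n S (\<lambda>x. x)"
proof (cases n)
  case (Suc m)
  have "deriv (\<lambda>x. x) = (\<lambda>x. 1)" by (rule ext) simp
  then show ?thesis using Suc smooth_upto_const by simp
qed simp

text \<open>Sums and products are treated together since the derivative of a product is a sum of
  products.\<close>
lemma smooth_upto_add_mult: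
  assumes "open S"
  shows "smooth_upto n S f \<Longrightarrow> smooth_upto n S g \<Longrightarrow>
    smooth_upto n S (\<lambda>x. f x + g x) \<and> smooth_upto n S (\<lambda>x. f x * g x)"
proof (induction n arbitrary: f g)
  case 0
  then show ?case by auto
next
  case (Suc n)
  have fd: "\<And>x. x \<in> S \<Longrightarrow> (f has_real_derivative deriv f x) (at x)"
   and gd: "\<And>x. x \<in> S \<Longrightarrow> (g has_real_derivative deriv g x) (at x)"
    using smooth_upto_has_deriv[OF Suc.prems(1)] smooth_upto_has_deriv[OF Suc.prems(2)] by blast+
  have deriv_add: "deriv (\<lambda>x. f x + g x) x = deriv f x + deriv g x" if "x \<in> S" for x
    using fd[OF that] gd[OF that] by (intro DERIV_imp_deriv derivative_intros)
  have deriv_mult: "deriv (\<lambda>x. f x * g x) x = deriv f x * g x + f x * deriv g x" if "x \<in> S" for x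
    using fd[OF that] gd[OF that] by (intro DERIV_imp_deriv derivative_eq_intros) auto
  have lower: "smooth_upto n S (deriv f)" "smooth_upto n S (deriv g)"
    "smooth_upto n S f" "smooth_upto n S g"
    using Suc.prems smooth_upto_Suc_imp by auto
  have "smooth_upto n S (\<lambda>x. deriv f x + deriv g x)" using Suc.IH lower by blast
  then have "smooth_upto n S (deriv (\<lambda>x. f x + g x))"
    by (rule smooth_upto_cong[OF assms, rotated]) (simp add: deriv_add)
  moreover have "smooth_upto n S (\<lambda>x. deriv f x * g x + f x * deriv g x)"
  proof -
    have "smooth_upto n S (\<lambda>x. deriv f x * g x)" "smooth_upto n S (\<lambda>x. f x * deriv g x)"
      using Suc.IH lower by blast+
    then show ?thesis using Suc.IH by blast
  qed
  then have "smooth_upto n S (deriv (\<lambda>x. f x * g x))"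
    by (rule smooth_upto_cong[OF assms, rotated]) (simp add: deriv_mult)
  moreover have "(\<lambda>x. f x + g x) differentiable at x" "(\<lambda>x. f x * g x) differentiable at x"
    if "x \<in> S" for x
    using Suc.prems that by auto
  ultimately show ?case by auto
qed

lemma smooth_upto_add:
  "open S \<Longrightarrow> smooth_upto n S f \<Longrightarrow> smooth_upto n S g \<Longrightarrow> smooth_upto n S (\<lambda>x. f x + g x)"
  using smooth_upto_add_mult by blast

lemma smooth_upto_mult:
  "open S \<Longrightarrow> smooth_upto n S f \<Longrightarrow> smooth_upto n S g \<Longrightarrow> smooth_upto n S (\<lambda>x. f x * g x)"
  using smooth_upto_add_mult by blast

lemma smooth_upto_minus: "open S \<Longrightarrow> smooth_upto n S f \<Longrightarrow> smooth_upto n S (\<lambda>x. - f x)"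
  using smooth_upto_mult[of S n "\<lambda>x. -1" f] smooth_upto_const by simp

lemma smooth_upto_diff:
  "open S \<Longrightarrow> smooth_upto n S f \<Longrightarrow> smooth_upto n S g \<Longrightarrow> smooth_upto n S (\<lambda>x. f x - g x)"
  using smooth_upto_add[of S n f "\<lambda>x. - g x"] smooth_upto_minus by simp

lemma smooth_upto_compose:
  assumes "open S" "open T"
  shows "(\<And>x. x \<in> S \<Longrightarrow> f x \<in> T) \<Longrightarrow> smooth_upto n T G \<Longrightarrow> smooth_upto n S f \<Longrightarrow>
    smooth_upto n S (\<lambda>x. G (f x))"
proof (induction n arbitrary: G f)
  case 0
  show ?case unfolding smooth_upto.simps
  proof
    fix x assume x: "x \<in> S"
    have "f differentiable at x" "G differentiable at (f x)" using 0 x by simp_all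
    then show "(\<lambda>x. G (f x)) differentiable at x"
      using differentiable_chain_at[of f x G] by (simp add: o_def)
  qed
next
  case (Suc n)
  have fd: "\<And>x. x \<in> S \<Longrightarrow> (f has_real_derivative deriv f x) (at x)"
    using smooth_upto_has_deriv[OF Suc.prems(3)] by blast
  have Gd: "\<And>y. y \<in> T \<Longrightarrow> (G has_real_derivative deriv G y) (at y)"
    using smooth_upto_has_deriv[OF Suc.prems(2)] by blast
  have chain: "((\<lambda>x. G (f x)) has_real_derivative deriv G (f x) * deriv f x) (at x)"
    if "x \<in> S" for x
    using DERIV_chain2[OF Gd[OF Suc.prems(1)[OF that]] fd[OF that]] .
  have "smooth_upto n S (\<lambda>x. deriv G (f x))"
    using Suc.IH[of f "deriv G"] Suc.prems smooth_upto_Suc_imp by auto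
  moreover have "smooth_upto n S (deriv f)" using Suc.prems(3) by simp
  ultimately have "smooth_upto n S (\<lambda>x. deriv G (f x) * deriv f x)"
    using smooth_upto_mult[OF assms(1)] by blast
  then have "smooth_upto n S (deriv (\<lambda>x. G (f x)))"
    by (rule smooth_upto_cong[OF assms(1), rotated]) (simp add: chain[THEN DERIV_imp_deriv])
  moreover have "(\<lambda>x. G (f x)) differentiable at x" if "x \<in> S" for x
    using chain[OF that] real_differentiable_def by blast
  ultimately show ?case by simp
qed

lemma smooth_upto_ode:
  assumes "open S" "open T" "\<And>x. x \<in> S \<Longrightarrow> f x \<in> T"
    "\<And>x. x \<in> S \<Longrightarrow> (f has_real_derivative G (f x)) (at x)" "\<And>n. smooth_upto n T G"
  shows "smooth_upto n S f"
proof -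
  have dif: "\<forall>x\<in>S. f differentiable at x" using assms(4) real_differentiable_def by blast
  show ?thesis
  proof (induction n)
    case 0
    then show ?case using dif by simp
  next
    case (Suc n)
    have "smooth_upto n S (\<lambda>x. G (f x))"
      using smooth_upto_compose[of S T f n G, OF assms(1,2)] assms(3,5) Suc.IH by blast
    moreover have "deriv f x = G (f x)" if "x \<in> S" for x
      using assms(4)[OF that] by (rule DERIV_imp_deriv)
    ultimately have "smooth_upto n S (deriv f)"
      using smooth_upto_cong[OF assms(1), of "\<lambda>x. G (f x)" "deriv f" n] by simp
    then show ?case using dif by simp
  qed
qed

lemma smooth_upto_sin_cos: "smooth_upto n S sin \<and> smooth_upto n S cos"
proof (induction n arbitrary: S)
  case 0 then show ?case by (simp add: real_differentiable_def, metis DERIV_sin DERIV_cos)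
next
  case (Suc n)
  have derivs: "deriv sin = cos" "deriv cos = (\<lambda>x. - sin x)"
    by (auto intro!: ext DERIV_imp_deriv derivative_eq_intros)
  have "smooth_upto n UNIV (\<lambda>x. - sin x)"
    using Suc.IH[of UNIV] smooth_upto_minus[OF open_UNIV] by blast
  then have "smooth_upto n S (\<lambda>x. - sin x)" using smooth_upto_subset by blast
  moreover have "(\<forall>x\<in>S. sin differentiable at x) \<and> (\<forall>x\<in>S. cos differentiable at x)"
    by (simp add: real_differentiable_def, metis DERIV_sin DERIV_cos)
  ultimately show ?case using Suc.IH[of S] by (simp add: derivs)
qed

lemma smooth_upto_cos_comp:
  "open S \<Longrightarrow> smooth_upto n S f \<Longrightarrow> smooth_upto n S (\<lambda>x. cos (f x))"
  using smooth_upto_compose[of S UNIV f n cos] smooth_upto_sin_cos by blast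

lemma open_nonzero: "open {x::real. x \<noteq> 0}"
  using open_Collect_neq[of "\<lambda>x. x" "\<lambda>x. 0"] by auto

text \<open>inverse solves y' = - y^2, sqrt solves y' = 1 / (2 y).\<close>
lemma smooth_upto_inverse: "smooth_upto n {x. x \<noteq> 0} inverse"
proof (rule smooth_upto_ode[where T=UNIV and G="\<lambda>y. - (y * y)"])
  show "(inverse has_real_derivative - (inverse x * inverse x)) (at x)" if "x \<in> {x. x \<noteq> 0}" for x
    using that by (auto intro!: derivative_eq_intros simp: power2_eq_square)
  show "smooth_upto n UNIV (\<lambda>y. - (y * y))" for n
    using smooth_upto_minus[OF open_UNIV smooth_upto_mult[OF open_UNIV smooth_upto_id smooth_upto_id]] .
qed (auto simp: open_nonzero)

lemma smooth_upto_inverse_comp: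
  assumes "open S" "smooth_upto n S f" "\<And>x. x \<in> S \<Longrightarrow> f x \<noteq> 0"
  shows "smooth_upto n S (\<lambda>x. inverse (f x))"
  using smooth_upto_compose[of S "{x. x \<noteq> 0}" f n inverse, OF assms(1) open_nonzero]
    smooth_upto_inverse assms(2,3) by blast

lemma smooth_upto_sqrt: "smooth_upto n {0<..} sqrt"
proof (rule smooth_upto_ode[where T="{0<..}" and G="\<lambda>y. inverse 2 * inverse y"])
  show "(sqrt has_real_derivative inverse 2 * inverse (sqrt x)) (at x)" if "x \<in> {0<..}" for x
    using DERIV_real_sqrt[of x] that by (simp add: field_simps)
  show "smooth_upto n {0<..} (\<lambda>y. inverse 2 * inverse y)" for n
  proof -
    have "smooth_upto n {0::real<..} inverse" by (rule smooth_upto_subset[OF smooth_upto_inverse]) auto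
    then show ?thesis using smooth_upto_mult[OF open_greaterThan smooth_upto_const] by blast
  qed
qed auto

lemma smooth_upto_sqrt_comp:
  assumes "open S" "smooth_upto n S f" "\<And>x. x \<in> S \<Longrightarrow> f x > 0"
  shows "smooth_upto n S (\<lambda>x. sqrt (f x))"
  using smooth_upto_compose[of S "{0<..}" f n sqrt, OF assms(1) open_greaterThan]
    smooth_upto_sqrt assms(2,3) by auto

section \<open>Classical solutions off a locally finite set are weak solutions\<close>

lemma ftc_finite_exceptions:
  fixes f f' :: "real \<Rightarrow> real"
  assumes "\<And>a b. finite (C \<inter> {a..b})" "a \<le> b"
    "\<And>x. x \<notin> C \<Longrightarrow> (f has_real_derivative f' x) (at x)" "continuous_on {a..b} f"
  shows "(f' has_integral (f b - f a)) {a..b}"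
  by (rule fundamental_theorem_of_calculus_interior_strong[OF assms(1)[of a b] assms(2) _ assms(4)])
     (use assms(3) in \<open>auto simp: has_real_derivative_iff_has_vector_derivative\<close>)

lemma H1loc_weak_deriv_piecewise:
  fixes f f' F :: "real \<Rightarrow> real"
  assumes C: "\<And>a b. finite (C \<inter> {a..b})"
    and cont: "continuous_on UNIV f"
    and f': "\<And>x. x \<notin> C \<Longrightarrow> (f has_real_derivative f' x) (at x)"
    and F: "\<And>a b. F integrable_on {a..b}" "\<And>x. x \<notin> C \<Longrightarrow> (f' x)\<^sup>2 = F x"
  shows "H1loc_weak_deriv f f'"
  unfolding H1loc_weak_deriv_def
proof (intro conjI allI impI)
  fix x y :: real assume "x \<le> y"
  show "(f' has_integral f y - f x) {x..y}"
    by (rule ftc_finite_exceptions[OF C \<open>x \<le> y\<close> f']) (auto intro: continuous_on_subset[OF cont])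
next
  fix x y :: real
  show "(\<lambda>t. (f' t)\<^sup>2) integrable_on {x..y}"
    by (rule integrable_spike_finite[OF C[of x y] _ F(1)]) (use F(2) in auto)
qed

lemma integration_by_parts_twice:
  fixes Q q r T :: "real \<Rightarrow> real"
  assumes C: "\<And>a b. finite (C \<inter> {a..b})" and AB: "A \<le> B"
    and Q: "continuous_on {A..B} Q" "\<And>x. x \<notin> C \<Longrightarrow> (Q has_real_derivative q x) (at x)"
    and q: "continuous_on {A..B} q" "\<And>x. x \<notin> C \<Longrightarrow> (q has_real_derivative r x) (at x)"
    and T: "\<And>x. (T has_real_derivative deriv T x) (at x)"
      "\<And>x. (deriv T has_real_derivative deriv (deriv T) x) (at x)"
      "continuous_on {A..B} (deriv (deriv T))"
    and ends: "T A = 0" "T B = 0" "deriv T A = 0" "deriv T B = 0"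
  shows "((\<lambda>x. r x * T x) has_integral integral {A..B} (\<lambda>x. Q x * deriv (deriv T) x)) {A..B}"
proof -
  have contT: "continuous_on {A..B} T" "continuous_on {A..B} (deriv T)"
    using T(1,2) by (meson DERIV_isCont continuous_at_imp_continuous_on)+
  define F where "F x = q x * T x - Q x * deriv T x" for x
  have "continuous_on {A..B} F" unfolding F_def
    using contT Q(1) q(1) by (intro continuous_intros)
  moreover have "(F has_real_derivative (r x * T x - Q x * deriv (deriv T) x)) (at x)"
    if "x \<notin> C" for x
  proof -
    have "(F has_real_derivative (r x * T x + deriv T x * q x) - (q x * deriv T x + deriv (deriv T) x * Q x)) (at x)"
      unfolding F_def by (intro DERIV_diff DERIV_mult q(2)[OF that] T Q(2)[OF that])
    then show ?thesis by (simp add: algebra_simps)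
  qed
  ultimately have "((\<lambda>x. r x * T x - Q x * deriv (deriv T) x) has_integral F B - F A) {A..B}"
    by (rule ftc_finite_exceptions[OF C AB, rotated])
  then have diff: "((\<lambda>x. r x * T x - Q x * deriv (deriv T) x) has_integral 0) {A..B}"
    using ends unfolding F_def by simp
  have "((\<lambda>x. Q x * deriv (deriv T) x) has_integral integral {A..B} (\<lambda>x. Q x * deriv (deriv T) x)) {A..B}"
    using Q(1) T(3) by (intro integrable_integral integrable_continuous_interval continuous_on_mult)
  from has_integral_add[OF diff this] show ?thesis by simp
qed

lemma integral_UNIV_vanishing_outside:
  fixes f :: "real \<Rightarrow> real"
  assumes "\<And>x. x \<notin> {A..B} \<Longrightarrow> f x = 0" "(f has_integral I) {A..B}"
  shows "integral UNIV f = I"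
proof -
  have "(\<lambda>x. if x \<in> {A..B} then f x else 0) = f" using assms(1) by auto
  then have "(f has_integral I) UNIV" using has_integral_restrict_UNIV[of "{A..B}" f I] assms(2) by simp
  then show ?thesis by (rule integral_unique)
qed

lemma deriv_vanishing_outside:
  fixes T :: "real \<Rightarrow> real"
  assumes "\<And>x. R < \<bar>x\<bar> \<Longrightarrow> T x = 0" "R < \<bar>x\<bar>"
  shows "deriv T x = 0"
proof -
  have "open {x::real. R < \<bar>x\<bar>}" by (intro open_Collect_less continuous_intros)
  then have "eventually (\<lambda>y. T y = 0) (nhds x)"
    using assms unfolding eventually_nhds by blast
  then have "deriv T x = deriv (\<lambda>_. 0) x" by (rule deriv_cong_ev) simp
  then show ?thesis by simp
qed

lemma test_function_support:
  assumes "test_function T"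
  obtains R where "0 \<le> R" "\<And>x. R < \<bar>x\<bar> \<Longrightarrow> T x = 0"
    "\<And>x. R < \<bar>x\<bar> \<Longrightarrow> deriv T x = 0" "\<And>x. R < \<bar>x\<bar> \<Longrightarrow> deriv (deriv T) x = 0"
proof -
  obtain B where B: "\<And>x. T x \<noteq> 0 \<Longrightarrow> \<bar>x\<bar> \<le> B"
    using assms unfolding test_function_def bounded_iff by auto
  have T0: "T x = 0" if "\<bar>B\<bar> < \<bar>x\<bar>" for x using B[of x] that by force
  have T1: "deriv T x = 0" if "\<bar>B\<bar> < \<bar>x\<bar>" for x
    using deriv_vanishing_outside[OF T0 that] .
  have T2: "deriv (deriv T) x = 0" if "\<bar>B\<bar> < \<bar>x\<bar>" for x
    using deriv_vanishing_outside[OF T1 that] .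
  show ?thesis by (rule that[of "\<bar>B\<bar>"]) (simp_all add: T0 T1 T2)
qed

lemma test_function_derivs:
  assumes "test_function T"
  shows "(T has_real_derivative deriv T x) (at x)"
    and "(deriv T has_real_derivative deriv (deriv T) x) (at x)"
    and "continuous_on S T" "continuous_on S (deriv (deriv T))"
proof -
  have "smooth_upto 2 UNIV T" using assms unfolding test_function_def smooth_on_iff_smooth_upto by blast
  then have dT: "\<And>x. (T has_real_derivative deriv T x) (at x)"
    and dT': "\<And>x. (deriv T has_real_derivative deriv (deriv T) x) (at x)"
    and dT'': "\<And>x. deriv (deriv T) differentiable at x"
    by (auto simp: numeral_2_eq_2 DERIV_deriv_iff_real_differentiable)
  then show "(T has_real_derivative deriv T x) (at x)"
    "(deriv T has_real_derivative deriv (deriv T) x) (at x)" by blast+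
  show "continuous_on S T" "continuous_on S (deriv (deriv T))"
    using dT dT'' by (meson DERIV_isCont continuous_at_imp_continuous_on
        differentiable_imp_continuous_within)+
qed

lemma weak_traveling_wave:
  fixes \<phi> g q r :: "real \<Rightarrow> real" and C :: "real set" and c a :: real
  assumes per: "periodic1 \<phi>" and cont: "continuous_on UNIV \<phi>"
    and C: "\<And>a b. finite (C \<inter> {a..b})"
    and dphi: "\<And>x. x \<notin> C \<Longrightarrow> (\<phi> has_real_derivative g x) (at x)"
    and dQ: "\<And>x. x \<notin> C \<Longrightarrow> ((\<lambda>x. (\<phi> x - c)\<^sup>2) has_real_derivative q x) (at x)"
    and contq: "continuous_on UNIV q"
    and dq: "\<And>x. x \<notin> C \<Longrightarrow> (q has_real_derivative r x) (at x)"
    and equation: "\<And>x. x \<notin> C \<Longrightarrow> (g x)\<^sup>2 = -4 * integral {0..1} \<phi> * \<phi> x + a + r x"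
  shows "muHS_traveling_wave c \<phi>"
proof -
  define K where "K = -4 * integral {0..1} \<phi>"
  have equation_K: "(g x)\<^sup>2 = K * \<phi> x + a + r x" if "x \<notin> C" for x
    using equation[OF that] unfolding K_def by simp
  define Q where "Q x = (\<phi> x - c)\<^sup>2" for x
  have contK: "continuous_on S (\<lambda>x. K * \<phi> x + a)" for S
    using cont by (intro continuous_intros) (auto intro: continuous_on_subset)
  have contQ: "continuous_on S Q" for S
    unfolding Q_def using cont by (intro continuous_intros) (auto intro: continuous_on_subset)
  have r_int: "(r has_integral (q y - q x)) {x..y}" if "x \<le> y" for x y
    by (rule ftc_finite_exceptions[OF C that dq]) (auto intro: continuous_on_subset[OF contq])
  have "(\<lambda>t. K * \<phi> t + a + r t) integrable_on {x..y}" for x y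
  proof (cases "x \<le> y")
    case True
    then show ?thesis using integrable_add[OF integrable_continuous_interval[OF contK]
        has_integral_integrable[OF r_int[OF True]]] by simp
  qed (simp add: integrable_on_empty)
  note int_rhs = this
  have H1: "H1loc_weak_deriv \<phi> g"
    by (rule H1loc_weak_deriv_piecewise[OF C cont dphi int_rhs equation_K])
  have weak_eq: "integral UNIV (\<lambda>x. (g x)\<^sup>2 * T x) =
             integral UNIV (\<lambda>x. (K * \<phi> x + a) * T x) + integral UNIV (\<lambda>x. Q x * deriv (deriv T) x)"
    if T: "test_function T" for T
  proof -
    obtain R where R: "0 \<le> R" and vanish: "\<And>x. R < \<bar>x\<bar> \<Longrightarrow> T x = 0"
      "\<And>x. R < \<bar>x\<bar> \<Longrightarrow> deriv T x = 0" "\<And>x. R < \<bar>x\<bar> \<Longrightarrow> deriv (deriv T) x = 0"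
      using test_function_support[OF T] by blast
    define A where "A = -(R+1)"
    define B where "B = R+1"
    have out: "R < \<bar>x\<bar>" if "x \<notin> {A..B}" for x using that unfolding A_def B_def by auto
    have AB: "A \<le> B" "R < \<bar>A\<bar>" "R < \<bar>B\<bar>" unfolding A_def B_def using R by auto
    define I1 where "I1 = integral {A..B} (\<lambda>x. (K * \<phi> x + a) * T x)"
    define I2 where "I2 = integral {A..B} (\<lambda>x. Q x * deriv (deriv T) x)"
    have i1: "((\<lambda>x. (K * \<phi> x + a) * T x) has_integral I1) {A..B}" unfolding I1_def
      by (intro integrable_integral integrable_continuous_interval continuous_on_mult contK
          test_function_derivs(3)[OF T])
    have i2: "((\<lambda>x. r x * T x) has_integral I2) {A..B}" unfolding I2_def
      using integration_by_parts_twice[OF C AB(1) contQ dQ[folded Q_def]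
          continuous_on_subset[OF contq] dq test_function_derivs(1,2,4)[OF T]] vanish AB(2,3)
      by simp
    have i12: "((\<lambda>x. (g x)\<^sup>2 * T x) has_integral I1 + I2) {A..B}"
      by (rule has_integral_spike_finite[OF C[of A B] _ has_integral_add[OF i1 i2]])
         (auto simp: equation_K algebra_simps)
    have i3: "((\<lambda>x. Q x * deriv (deriv T) x) has_integral I2) {A..B}" unfolding I2_def
      by (intro integrable_integral integrable_continuous_interval continuous_on_mult contQ
          test_function_derivs(4)[OF T])
    have "integral UNIV (\<lambda>x. (g x)\<^sup>2 * T x) = I1 + I2"
      by (rule integral_UNIV_vanishing_outside[OF _ i12]) (simp add: vanish out)
    moreover have "integral UNIV (\<lambda>x. (K * \<phi> x + a) * T x) = I1"
      by (rule integral_UNIV_vanishing_outside[OF _ i1]) (simp add: vanish out)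
    moreover have "integral UNIV (\<lambda>x. Q x * deriv (deriv T) x) = I2"
      by (rule integral_UNIV_vanishing_outside[OF _ i3]) (simp add: vanish out)
    ultimately show ?thesis by simp
  qed
  show ?thesis unfolding muHS_traveling_wave_def
    using per H1 weak_eq unfolding K_def Q_def by blast
qed

section \<open>Inverting a normalized primitive of a periodic density\<close>

lemma exists_cos_ne_one:
  fixes a b :: real
  assumes "a < b"
  obtains t where "a < t" "t < b" "cos t \<noteq> 1"
proof (cases "cos ((a+b)/2) = 1")
  case False then show ?thesis using that[of "(a+b)/2"] assms by auto
next
  case True
  define e where "e = min ((b-a)/4) 1"
  have e: "0 < e" "e \<le> 1" "e < (b-a)/2" using assms unfolding e_def min_def by auto
  have "sin ((a+b)/2) = 0" using True cos_one_sin_zero by blast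
  then have "cos ((a+b)/2 + e) = cos e" using True by (simp add: cos_add)
  moreover have "cos e < cos 0" using e pi_gt3 by (intro cos_monotone_0_pi) auto
  ultimately have "cos ((a+b)/2 + e) \<noteq> 1" by simp
  moreover have "a < (a+b)/2 + e" "(a+b)/2 + e < b" using e assms by (simp_all add: field_simps)
  ultimately show ?thesis using that by blast
qed

lemma strict_mono_by_deriv_dense_pos:
  fixes f f' :: "real \<Rightarrow> real"
  assumes d: "\<And>x. (f has_real_derivative f' x) (at x)"
    and nonneg: "\<And>x. f' x \<ge> 0"
    and dense_pos: "\<And>a b. a < b \<Longrightarrow> \<exists>t. a < t \<and> t < b \<and> f' t > 0"
    and ab: "a < b"
  shows "f a < f b"
proof (rule ccontr)
  have mono: "f u \<le> f v" if "u \<le> v" for u v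
    using DERIV_nonneg_imp_nondecreasing[OF that] d nonneg by blast
  obtain t where t: "a < t" "t < b" "f' t > 0" using dense_pos[OF ab] by blast
  assume "\<not> f a < f b"
  then have "f a = f b" using mono[of a b] ab by auto
  then have const: "f s = f a" if "s \<in> {a<..<b}" for s
    using mono[of a s] mono[of s b] that by auto
  have "((\<lambda>_. f a) has_real_derivative 0) (at t)" by simp
  then have "(f has_real_derivative 0) (at t)"
    by (rule has_field_derivative_transform_within_open[of _ _ _ "{a<..<b}"]) (use t const in auto)
  then have "f' t = 0" using DERIV_unique d by blast
  then show False using t(3) by simp
qed

locale phase_reparam =
  fixes h :: "real \<Rightarrow> real"
  assumes h_smooth: "\<And>n. smooth_upto n UNIV h"
    and h_periodic: "\<And>t. h (t + 2*pi) = h t"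
    and h_nonneg: "\<And>t. h t \<ge> 0"
    and h_pos: "\<And>t. cos t \<noteq> 1 \<Longrightarrow> h t > 0"
begin

lemma h_cont: "continuous_on A h"
proof -
  have "\<forall>x. h differentiable at x" using h_smooth[of 0] by simp
  then show ?thesis by (meson continuous_at_imp_continuous_on differentiable_imp_continuous_within)
qed

text \<open>X is the signed primitive of h vanishing at 0.  Measured from any base point A below
  both 0 and t it is a difference of two ordinary integrals, which gives its derivative.\<close>
definition X :: "real \<Rightarrow> real" where
  "X t = integral {0..t} h - integral {t..0} h"

lemma X_eq: "A \<le> min t 0 \<Longrightarrow> X t = integral {A..t} h - integral {A..0} h"
proof -
  assume A: "A \<le> min t 0"
  show ?thesis
  proof (cases "0 \<le> t")
    case True
    have "integral {A..0} h + integral {0..t} h = integral {A..t} h"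
      using A True Henstock_Kurzweil_Integration.integral_combine[where a=A and c=0 and b=t and f=h]
        integrable_continuous_interval[OF h_cont] by auto
    moreover have "integral {t..0} h = 0" using True
      by (cases "t = 0") auto
    ultimately show ?thesis unfolding X_def by simp
  next
    case False
    have "integral {A..t} h + integral {t..0} h = integral {A..0} h"
      using A False Henstock_Kurzweil_Integration.integral_combine[where a=A and c=t and b=0 and f=h]
        integrable_continuous_interval[OF h_cont] by auto
    moreover have "integral {0..t} h = 0" using False by simp
    ultimately show ?thesis unfolding X_def by simp
  qed
qed

lemma X_deriv: "(X has_real_derivative h t) (at t)"
proof -
  define A where "A = min t 0 - 1"
  have "((\<lambda>x. integral {A..x} h) has_real_derivative h t) (at t within {A..t+1})"
    using A_def by (intro integral_has_real_derivative h_cont) auto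
  then have "((\<lambda>x. integral {A..x} h) has_real_derivative h t) (at t)"
    using at_within_Icc_at[of A t "t+1"] A_def by simp
  then have "((\<lambda>x. integral {A..x} h - integral {A..0} h) has_real_derivative h t) (at t)"
    by (auto intro!: derivative_eq_intros)
  then show ?thesis
  proof (rule has_field_derivative_transform_within_open[of _ _ _ "{A<..}"])
    fix x assume "x \<in> {A<..}"
    then have "A \<le> min x 0" unfolding A_def by auto
    then show "integral {A..x} h - integral {A..0} h = X x" using X_eq by simp
  qed (use A_def in auto)
qed

lemma X_cont: "continuous_on A X"
  using X_deriv by (meson DERIV_isCont continuous_at_imp_continuous_on)

lemma X0: "X 0 = 0" unfolding X_def by simp

definition P :: real where "P = X (2*pi)"

lemma X_strict: "a < b \<Longrightarrow> X a < X b"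
proof (rule strict_mono_by_deriv_dense_pos[OF X_deriv h_nonneg])
  show "\<exists>t. a < t \<and> t < b \<and> h t > 0" if "a < b" for a b
    using exists_cos_ne_one[OF that] h_pos by blast
qed

lemma X_per: "X (t + 2*pi) = X t + P"
proof -
  have "((\<lambda>t. X (t + 2*pi) - X t) has_real_derivative 0) (at t)" for t
  proof -
    have "((\<lambda>t. X (t + 2*pi) - X t) has_real_derivative h (t + 2*pi) - h t) (at t)"
      using DERIV_shift[of X "h (t + 2*pi)" t "2*pi"] X_deriv[of "t + 2*pi"] X_deriv[of t]
      by (intro DERIV_diff) auto
    then show ?thesis using h_periodic by simp
  qed
  then have "\<forall>t. ((\<lambda>t. X (t + 2*pi) - X t) has_real_derivative 0) (at t)" by blast
  from DERIV_isconst_all[OF this, of t 0] have "X (t + 2*pi) - X t = X (0 + 2*pi) - X 0" by simp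
  then show ?thesis unfolding P_def using X0 by simp
qed

lemma P_pos: "P > 0" unfolding P_def using X_strict[of 0 "2*pi"] X0 by simp

lemma X_nat: "X (t + 2*pi*real n) = X t + real n * P"
proof (induction n)
  case (Suc n)
  have "X (t + 2*pi*real (Suc n)) = X ((t + 2*pi*real n) + 2*pi)" by (simp add: algebra_simps)
  also have "\<dots> = X (t + 2*pi*real n) + P" by (rule X_per)
  also have "\<dots> = X t + real (Suc n) * P" using Suc by (simp add: distrib_right)
  finally show ?case .
qed simp

lemma X_int: "X (t + 2*pi*real_of_int k) = X t + real_of_int k * P"
proof (cases "k \<ge> 0")
  case True
  define n where "n = nat k"
  have "k = int n" using True n_def by simp
  then show ?thesis using X_nat[of t n] by simp
next
  case False
  define n where "n = nat (- k)"
  have n: "k = - int n" using False n_def by simp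
  have "X t = X ((t - 2*pi*real n) + 2*pi*real n)" by simp
  also have "\<dots> = X (t - 2*pi*real n) + real n * P" by (rule X_nat)
  finally show ?thesis using n by (simp add: algebra_simps)
qed

lemma X_surj: "\<exists>t. X t = y"
proof -
  obtain n :: nat where n: "\<bar>y\<bar> / P < real n" using reals_Archimedean2 by blast
  then have n': "\<bar>y\<bar> < real n * P" using P_pos by (simp add: field_simps)
  have "X (0 + 2*pi*real_of_int (- int n)) = - real n * P" using X_int[of 0 "- int n"] X0 by simp
  moreover have "X (0 + 2*pi*real n) = real n * P" using X_nat[of 0 n] X0 by simp
  ultimately have "X (- 2*pi*real n) \<le> y" "y \<le> X (2*pi*real n)" using n' by auto
  then show ?thesis using IVT'[of X "- 2*pi*real n" y "2*pi*real n"] X_cont by auto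
qed

definition Xn :: "real \<Rightarrow> real" where "Xn t = X t / P"

lemma Xn_strict: "a < b \<Longrightarrow> Xn a < Xn b"
  using X_strict P_pos unfolding Xn_def by (simp add: divide_strict_right_mono)

lemma Xn_inj: "inj Xn"
proof (rule injI)
  fix a b assume "Xn a = Xn b"
  then show "a = b" using Xn_strict[of a b] Xn_strict[of b a] by (cases a b rule: linorder_cases) auto
qed

lemma Xn_surj: "surj Xn"
proof -
  have "\<exists>t. Xn t = y" for y
  proof -
    obtain t where "X t = y * P" using X_surj by blast
    then have "Xn t = y" unfolding Xn_def using P_pos by simp
    then show ?thesis by blast
  qed
  then show ?thesis by (metis surjI)
qed

lemma Xn_int: "Xn (t + 2*pi*real_of_int k) = Xn t + real_of_int k"
  unfolding Xn_def X_int using P_pos by (simp add: field_simps)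

lemma Xn_per: "Xn (t + 2*pi) = Xn t + 1"
  using Xn_int[of t 1] by simp

lemma Xn0: "Xn 0 = 0" unfolding Xn_def X0 by simp

lemma Xn_deriv: "(Xn has_real_derivative h t / P) (at t)"
  unfolding Xn_def using DERIV_cdivide[OF X_deriv, of P] by simp

definition theta :: "real \<Rightarrow> real" where "theta = inv Xn"

lemma theta_Xn[simp]: "theta (Xn t) = t" unfolding theta_def by (simp add: Xn_inj)

lemma Xn_theta[simp]: "Xn (theta x) = x" unfolding theta_def by (simp add: Xn_surj surj_f_inv_f)

lemma theta_0: "theta 0 = 0" using theta_Xn[of 0] Xn0 by simp

lemma theta_per: "theta (x + 1) = theta x + 2*pi"
  using theta_Xn[of "theta x + 2*pi"] Xn_per[of "theta x"] by simp

lemma theta_int: "theta (x + real_of_int k) = theta x + 2*pi*real_of_int k"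
  using theta_Xn[of "theta x + 2*pi*real_of_int k"] Xn_int[of "theta x" k] by simp

lemma theta_strict: "x < y \<Longrightarrow> theta x < theta y"
  by (metis Xn_theta Xn_strict not_less_iff_gr_or_eq)

lemma theta_cont: "isCont theta x"
proof -
  have "isCont theta (Xn (theta x))"
    by (rule isCont_inverse_function[where d=1]) (auto intro: DERIV_isCont[OF Xn_deriv])
  then show ?thesis by simp
qed

lemma theta_cont_on: "continuous_on A theta"
  using theta_cont by (simp add: continuous_at_imp_continuous_on)

lemma theta_deriv: "h (theta x) > 0 \<Longrightarrow> (theta has_real_derivative P / h (theta x)) (at x)"
proof -
  assume hp: "h (theta x) > 0"
  have "(theta has_real_derivative inverse (h (theta x) / P)) (at x)"
    by (rule DERIV_inverse_function[where f=Xn and a="x - 1" and b="x + 1"])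
       (use hp P_pos Xn_deriv theta_cont in auto)
  then show ?thesis by simp
qed

text \<open>At regular points theta has the finite derivative P / h (theta x); by the inverse-function
  form of the ODE theta' = P / h(theta) it is smooth there.\<close>
definition regular :: "real set" where "regular = {x. h (theta x) > 0}"

lemma regular_open: "open regular"
proof -
  have "continuous_on UNIV (\<lambda>x. h (theta x))"
    using continuous_on_compose2[OF h_cont theta_cont_on] by auto
  then show ?thesis unfolding regular_def
    using open_Collect_less[of "\<lambda>x. 0" "\<lambda>x. h (theta x)"] by (auto simp: continuous_on_def)
qed

lemma theta_smooth: "smooth_upto n regular theta"
proof (rule smooth_upto_ode[OF regular_open open_Collect_less[of "\<lambda>x. 0" h]])
  show "continuous_on UNIV (\<lambda>x. 0::real)" "continuous_on UNIV h" using h_cont by auto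
  show "theta x \<in> {t. 0 < h t}" if "x \<in> regular" for x using that unfolding regular_def by simp
  show "(theta has_real_derivative P * inverse (h (theta x))) (at x)" if "x \<in> regular" for x
    using theta_deriv that unfolding regular_def by (simp add: field_simps)
  show "smooth_upto n {t. 0 < h t} (\<lambda>t. P * inverse (h t))" for n
  proof -
    have o: "open {t. 0 < h t}" using open_Collect_less[of "\<lambda>x. 0" h] h_cont by auto
    have "smooth_upto n {t. 0 < h t} (\<lambda>t. inverse (h t))"
      by (rule smooth_upto_inverse_comp[OF o]) (use smooth_upto_subset[OF h_smooth] in auto)
    then show ?thesis using smooth_upto_mult[OF o smooth_upto_const] by blast
  qed
qed

lemma nonregular_Ints: "x \<notin> regular \<Longrightarrow> x \<in> \<int>"
proof -
  assume "x \<notin> regular"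
  then have "h (theta x) \<le> 0" unfolding regular_def by auto
  then have "cos (theta x) = 1" using h_pos by force
  then obtain k where k: "theta x = real_of_int k * 2 * pi" using cos_one_2pi_int by blast
  have "x = Xn (theta x)" by simp
  also have "\<dots> = Xn (0 + 2*pi*real_of_int k)" using k by (simp add: algebra_simps)
  also have "\<dots> = real_of_int k" using Xn_int[of 0 k] Xn0 by simp
  finally show ?thesis by simp
qed

lemma nonregular_finite: "finite ((- regular) \<inter> {a..b})"
proof -
  have "(- regular) \<inter> {a..b} \<subseteq> real_of_int ` {\<lfloor>a\<rfloor>..\<lceil>b\<rceil>}"
  proof
    fix x assume x: "x \<in> (- regular) \<inter> {a..b}"
    then obtain k where k: "x = real_of_int k" using nonregular_Ints Ints_cases by blast
    then have "\<lfloor>a\<rfloor> \<le> k" "k \<le> \<lceil>b\<rceil>" using x by (auto simp: floor_le_iff le_ceiling_iff) 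
    then show "x \<in> real_of_int ` {\<lfloor>a\<rfloor>..\<lceil>b\<rceil>}" using k by auto
  qed
  then show ?thesis by (rule finite_subset) auto
qed

end

section \<open>The explicit traveling waves\<close>

text \<open>Read co = cos theta, s = sin theta,
  W = sqrt (1 - k co + beta), with p = 1 - k co the profile; then lam k P s W / p is phi_x and
  the identity below is the traveling-wave equation phi_x^2 = -4 mu phi + a + ((phi - c)^2)_xx
  with mu = -lam P^2/2 and a = -2 lam P^2 c - lam^2 P^2 (2 - beta).  The hypothesis
  (1 - k) beta = 0 is exactly what makes the terms without denominator cancel.\<close>
lemma wave_identity_cleared:
  fixes k \<beta> lam P c s co W :: real
  assumes W: "W\<^sup>2 = 1 - k * co + \<beta>" and sc: "s\<^sup>2 + co\<^sup>2 = 1" and kb: "(1 - k) * \<beta> = 0"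
  shows "(lam * k * P * s * W)\<^sup>2 =
      (2 * lam * P\<^sup>2 * (c + lam * (1 - k * co)) + (-2 * lam * P\<^sup>2 * c - lam\<^sup>2 * P\<^sup>2 * (2 - \<beta>)))
        * (1 - k * co)\<^sup>2
      + 2 * lam\<^sup>2 * k * P\<^sup>2 * (co * (1 - k * co + \<beta>) + k * s\<^sup>2 / 2) * (1 - k * co)"
  using W sc kb by algebra

lemma wave_identity:
  fixes k \<beta> lam P c s co W :: real
  assumes W: "W\<^sup>2 = 1 - k * co + \<beta>" and sc: "s\<^sup>2 + co\<^sup>2 = 1" and kb: "(1 - k) * \<beta> = 0"
    and p: "1 - k * co \<noteq> 0"
  shows "(lam * k * P * s * W / (1 - k * co))\<^sup>2 =
      2 * lam * P\<^sup>2 * (c + lam * (1 - k * co)) + (-2 * lam * P\<^sup>2 * c - lam\<^sup>2 * P\<^sup>2 * (2 - \<beta>))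
      + 2 * lam\<^sup>2 * k * P\<^sup>2 * (co * (1 - k * co + \<beta>) + k * s\<^sup>2 / 2) / (1 - k * co)"
proof -
  define A where "A = 2 * lam * P\<^sup>2 * (c + lam * (1 - k * co)) + (-2 * lam * P\<^sup>2 * c - lam\<^sup>2 * P\<^sup>2 * (2 - \<beta>))"
  define B where "B = 2 * lam\<^sup>2 * k * P\<^sup>2 * (co * (1 - k * co + \<beta>) + k * s\<^sup>2 / 2)"
  define p where "p = 1 - k * co"
  define N where "N = lam * k * P * s * W"
  have "N\<^sup>2 = A * p\<^sup>2 + B * p"
    using wave_identity_cleared[OF W sc kb] unfolding A_def B_def p_def N_def .
  then have "(N / p)\<^sup>2 = A + B / p" using p unfolding p_def[symmetric]
    by (simp add: power_divide field_simps power2_eq_square)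
  then show ?thesis unfolding A_def B_def p_def N_def .
qed

text \<open>The derivative of (phi - c)^2 computed by the chain rule, brought to the form of sq_xx.\<close>
lemma sq_x_deriv_identity:
  fixes lam k P co s W p :: real
  assumes "W \<noteq> 0" "p \<noteq> 0"
  shows "2 * lam\<^sup>2 * k * P * (co * (P * W / p) * W + s * (k * s / (2 * W) * (P * W / p)))
       = 2 * lam\<^sup>2 * k * P\<^sup>2 * (co * W\<^sup>2 + k * s\<^sup>2 / 2) / p"
  using assms by (simp add: field_simps power2_eq_square)

text \<open>Density of the position variable with respect to the phase.\<close>
definition hfun :: "real \<Rightarrow> real \<Rightarrow> real \<Rightarrow> real" where
  "hfun k \<beta> t = (1 - k * cos t) / sqrt (1 - k * cos t + \<beta>)"

locale wave =
  fixes k \<beta> c :: real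
  assumes k_pos: "0 < k" and k_le_1: "k \<le> 1" and beta_nonneg: "0 \<le> \<beta>"
    and k_beta: "(1 - k) * \<beta> = 0" and nondegenerate: "k < 1 \<or> 0 < \<beta>" and c_nonzero: "c \<noteq> 0"
begin

lemma k_cos_le: "k * cos t \<le> 1"
proof -
  have "k * cos t \<le> k * 1" using k_pos by (intro mult_left_mono) auto
  then show ?thesis using k_le_1 by linarith
qed

lemma radicand_pos: "1 - k * cos t + \<beta> > 0"
proof (cases "k < 1")
  case True
  have "k * cos t \<le> k * 1" using k_pos by (intro mult_left_mono) auto
  then show ?thesis using True beta_nonneg by linarith
next
  case False then show ?thesis using nondegenerate k_cos_le[of t] by linarith
qed

lemma profile_nonneg: "1 - k * cos t \<ge> 0" using k_cos_le[of t] by linarith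

lemma profile_pos: "cos t \<noteq> 1 \<Longrightarrow> 1 - k * cos t > 0"
proof -
  assume "cos t \<noteq> 1"
  then have "cos t < 1" using cos_le_one[of t] by linarith
  show ?thesis
  proof (cases "cos t \<ge> 0")
    case True
    have "k * cos t \<le> 1 * cos t" using True k_le_1 by (intro mult_right_mono) auto
    then show ?thesis using \<open>cos t < 1\<close> by linarith
  next
    case False
    then have "k * cos t < 0" using k_pos by (simp add: mult_pos_neg)
    then show ?thesis by linarith
  qed
qed

lemma hfun_pos_iff: "hfun k \<beta> t > 0 \<longleftrightarrow> 1 - k * cos t > 0"
  unfolding hfun_def using radicand_pos[of t] by (auto simp: zero_less_divide_iff)

lemma hfun_smooth: "smooth_upto n UNIV (hfun k \<beta>)"
proof -
  have profile: "smooth_upto n UNIV (\<lambda>t. 1 - k * cos t)"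
    using smooth_upto_diff[OF open_UNIV smooth_upto_const
        smooth_upto_mult[OF open_UNIV smooth_upto_const smooth_upto_cos_comp[OF open_UNIV smooth_upto_id]]] .
  then have "smooth_upto n UNIV (\<lambda>t. 1 - k * cos t + \<beta>)"
    using smooth_upto_add[OF open_UNIV _ smooth_upto_const] by blast
  then have "smooth_upto n UNIV (\<lambda>t. inverse (sqrt (1 - k * cos t + \<beta>)))"
    by (intro smooth_upto_inverse_comp smooth_upto_sqrt_comp open_UNIV)
       (use radicand_pos in \<open>auto simp: less_imp_neq[symmetric]\<close>)
  then have "smooth_upto n UNIV (\<lambda>t. (1 - k * cos t) * inverse (sqrt (1 - k * cos t + \<beta>)))"
    using smooth_upto_mult[OF open_UNIV profile] by blast
  moreover have "(\<lambda>t. (1 - k * cos t) * inverse (sqrt (1 - k * cos t + \<beta>))) = hfun k \<beta>"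
    by (auto simp: hfun_def field_simps)
  ultimately show ?thesis by simp
qed

end

sublocale wave \<subseteq> phase_reparam "hfun k \<beta>"
proof
  show "smooth_upto n UNIV (hfun k \<beta>)" for n by (rule hfun_smooth)
  show "hfun k \<beta> (t + 2 * pi) = hfun k \<beta> t" for t by (simp add: hfun_def)
  show "0 \<le> hfun k \<beta> t" for t using profile_nonneg[of t] radicand_pos[of t] by (simp add: hfun_def)
  show "cos t \<noteq> 1 \<Longrightarrow> 0 < hfun k \<beta> t" for t using profile_pos hfun_pos_iff by blast
qed

context wave
begin

text \<open>The wave phi = c + lam psi with profile psi = 1 - k cos theta; lam is fixed by the
  requirement int_0^1 phi = -lam P^2 / 2.\<close>
definition psi :: "real \<Rightarrow> real" where "psi x = 1 - k * cos (theta x)"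
definition M :: real where "M = integral {0..1} psi"
definition lam :: real where "lam = - c / (P\<^sup>2 / 2 + M)"
definition phi :: "real \<Rightarrow> real" where "phi x = c + lam * psi x"
definition w :: "real \<Rightarrow> real" where "w t = sqrt (1 - k * cos t + \<beta>)"

lemma psi_cont: "continuous_on A psi"
  unfolding psi_def by (intro continuous_intros theta_cont_on)

lemma M_nonneg: "M \<ge> 0"
  unfolding M_def psi_def using profile_nonneg
  by (intro integral_nonneg integrable_continuous_interval psi_cont[unfolded psi_def]) auto

lemma lam_denominator_pos: "P\<^sup>2 / 2 + M > 0" using P_pos M_nonneg by (simp add: add_pos_nonneg)

lemma lam_nonzero: "lam \<noteq> 0" unfolding lam_def using c_nonzero lam_denominator_pos by simp

lemma lam_eq: "lam * (P\<^sup>2 / 2 + M) = - c" unfolding lam_def using lam_denominator_pos by simp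

lemma sgn_lam: "sgn lam = - sgn c"
  using lam_denominator_pos unfolding lam_def by (simp add: sgn_mult sgn_minus)

lemma mean_phi: "integral {0..1} phi = - lam * P\<^sup>2 / 2"
proof -
  have "(\<lambda>x. lam * psi x) integrable_on {0..1}" "(\<lambda>x. c) integrable_on {0..1::real}"
    by (intro integrable_continuous_interval continuous_intros psi_cont)+
  then have "integral {0..1} phi = c + lam * M" unfolding phi_def M_def
    using Henstock_Kurzweil_Integration.integral_add by fastforce
  then show ?thesis using lam_eq by (simp add: algebra_simps)
qed

lemma phi_cont: "continuous_on A phi"
  unfolding phi_def by (intro continuous_intros psi_cont)

lemma phi_periodic: "periodic1 phi"
  unfolding periodic1_def phi_def psi_def using theta_per by simp

lemma regular_psi_pos: "x \<in> regular \<Longrightarrow> 1 - k * cos (theta x) > 0"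
  unfolding regular_def using hfun_pos_iff by blast

lemma w_pos: "w t > 0" unfolding w_def using radicand_pos by simp
lemma w_sq: "(w t)\<^sup>2 = 1 - k * cos t + \<beta>" unfolding w_def using radicand_pos[of t] by simp

lemma w_deriv: "(w has_real_derivative k * sin t / (2 * w t)) (at t)"
  unfolding w_def using radicand_pos[of t]
  by (auto intro!: derivative_eq_intros simp: field_simps)

lemma w_theta_cont: "isCont (\<lambda>x. w (theta x)) x"
  by (rule isCont_o2[OF theta_cont DERIV_isCont[OF w_deriv]])

lemma theta_has_deriv:
  "x \<in> regular \<Longrightarrow> (theta has_real_derivative P * w (theta x) / (1 - k * cos (theta x))) (at x)"
  using theta_deriv[of x] unfolding regular_def w_def hfun_def by simp

text \<open>phi_x, sq_x, sq_xx: the classical derivatives of phi, of (phi - c)^2 and of its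
  derivative at regular points.\<close>
definition phi_x :: "real \<Rightarrow> real" where
  "phi_x x = lam * k * P * sin (theta x) * w (theta x) / (1 - k * cos (theta x))"
definition sq_x :: "real \<Rightarrow> real" where
  "sq_x x = 2 * lam\<^sup>2 * k * P * sin (theta x) * w (theta x)"
definition sq_xx :: "real \<Rightarrow> real" where
  "sq_xx x = 2 * lam\<^sup>2 * k * P\<^sup>2 *
     (cos (theta x) * (1 - k * cos (theta x) + \<beta>) + k * (sin (theta x))\<^sup>2 / 2) / (1 - k * cos (theta x))"
definition a_wave :: real where "a_wave = -2 * lam * P\<^sup>2 * c - lam\<^sup>2 * P\<^sup>2 * (2 - \<beta>)"

lemma phi_has_deriv: "x \<in> regular \<Longrightarrow> (phi has_real_derivative phi_x x) (at x)"
proof -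
  assume x: "x \<in> regular"
  have "(phi has_real_derivative
      lam * (k * (sin (theta x) * (P * w (theta x) / (1 - k * cos (theta x)))))) (at x)"
    unfolding phi_def psi_def by (auto intro!: derivative_eq_intros theta_has_deriv[OF x])
  then show ?thesis unfolding phi_x_def by (simp add: algebra_simps)
qed

lemma sq_has_deriv: "x \<in> regular \<Longrightarrow> ((\<lambda>x. (phi x - c)\<^sup>2) has_real_derivative sq_x x) (at x)"
proof -
  assume x: "x \<in> regular"
  have "((\<lambda>x. (phi x - c)\<^sup>2) has_real_derivative 2 * (phi x - c) * phi_x x) (at x)"
    by (auto intro!: derivative_eq_intros phi_has_deriv[OF x])
  moreover have "2 * (phi x - c) * phi_x x = sq_x x"
    using regular_psi_pos[OF x] unfolding phi_def psi_def phi_x_def sq_x_def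
    by (simp add: field_simps power2_eq_square)
  ultimately show ?thesis by simp
qed

lemma sq_x_cont: "continuous_on A sq_x"
  unfolding sq_x_def using w_theta_cont
  by (intro continuous_intros theta_cont_on continuous_at_imp_continuous_on) auto

lemma sq_x_has_deriv: "x \<in> regular \<Longrightarrow> (sq_x has_real_derivative sq_xx x) (at x)"
proof -
  assume x: "x \<in> regular"
  define D where "D = P * w (theta x) / (1 - k * cos (theta x))"
  have dw: "((\<lambda>x. w (theta x)) has_real_derivative k * sin (theta x) / (2 * w (theta x)) * D) (at x)"
    using DERIV_chain2[OF w_deriv theta_has_deriv[OF x]] unfolding D_def .
  have "(sq_x has_real_derivative 2 * lam\<^sup>2 * k * P *
      (cos (theta x) * D * w (theta x) + sin (theta x) * (k * sin (theta x) / (2 * w (theta x)) * D))) (at x)"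
    unfolding sq_x_def using theta_has_deriv[OF x] dw unfolding D_def[symmetric]
    by (auto intro!: derivative_eq_intros simp: algebra_simps)
  moreover have "2 * lam\<^sup>2 * k * P *
      (cos (theta x) * D * w (theta x) + sin (theta x) * (k * sin (theta x) / (2 * w (theta x)) * D))
      = sq_xx x"
    using sq_x_deriv_identity[of "w (theta x)" "1 - k * cos (theta x)" lam k P "cos (theta x)" "sin (theta x)"]
      regular_psi_pos[OF x] w_pos[of "theta x"] w_sq[of "theta x"] unfolding D_def sq_xx_def by simp
  ultimately show ?thesis by simp
qed

lemma pointwise_equation:
  "x \<in> regular \<Longrightarrow> (phi_x x)\<^sup>2 = -4 * integral {0..1} phi * phi x + a_wave + sq_xx x"
proof -
  assume x: "x \<in> regular"
  have "(phi_x x)\<^sup>2 = 2 * lam * P\<^sup>2 * (c + lam * (1 - k * cos (theta x)))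
        + (-2 * lam * P\<^sup>2 * c - lam\<^sup>2 * P\<^sup>2 * (2 - \<beta>))
        + 2 * lam\<^sup>2 * k * P\<^sup>2 * (cos (theta x) * (1 - k * cos (theta x) + \<beta>) + k * (sin (theta x))\<^sup>2 / 2)
          / (1 - k * cos (theta x))"
    unfolding phi_x_def using wave_identity[OF w_sq sin_cos_squared_add k_beta] regular_psi_pos[OF x]
    by simp
  then show ?thesis unfolding mean_phi a_wave_def sq_xx_def phi_def psi_def by (simp add: algebra_simps)
qed

theorem phi_traveling_wave: "muHS_traveling_wave c phi"
proof (rule weak_traveling_wave[where C = "- regular" and g = phi_x and q = sq_x and r = sq_xx
      and a = a_wave, OF phi_periodic phi_cont nonregular_finite _ _ sq_x_cont])
  show "(phi has_real_derivative phi_x x) (at x)" if "x \<notin> - regular" for x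
    using that by (simp add: phi_has_deriv)
  show "((\<lambda>x. (phi x - c)\<^sup>2) has_real_derivative sq_x x) (at x)" if "x \<notin> - regular" for x
    using that by (simp add: sq_has_deriv)
  show "(sq_x has_real_derivative sq_xx x) (at x)" if "x \<notin> - regular" for x
    using that by (simp add: sq_x_has_deriv)
  show "(phi_x x)\<^sup>2 = -4 * integral {0..1} phi * phi x + a_wave + sq_xx x" if "x \<notin> - regular" for x
    using that by (simp add: pointwise_equation)
qed

lemma phi_smooth: "smooth_upto n regular phi"
  unfolding phi_def psi_def
  by (intro smooth_upto_add smooth_upto_mult smooth_upto_diff smooth_upto_cos_comp smooth_upto_const
      theta_smooth regular_open)

text \<open>Translation invariants: the extreme values of the deviation |phi - c|.\<close>
lemma deviation: "\<bar>phi x - c\<bar> = \<bar>lam\<bar> * (1 - k * cos (theta x))"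
  unfolding phi_def psi_def using profile_nonneg[of "theta x"] by (simp add: abs_mult)

lemma phi_0: "phi 0 = c + lam * (1 - k)" unfolding phi_def psi_def theta_0 by simp
lemma phi_pi: "phi (Xn pi) = c + lam * (1 + k)" unfolding phi_def psi_def by simp

lemma deviation_Inf: "Inf (range (\<lambda>x. \<bar>phi x - c\<bar>)) = \<bar>lam\<bar> * (1 - k)"
proof (rule cInf_eq_minimum)
  show "\<bar>lam\<bar> * (1 - k) \<in> range (\<lambda>x. \<bar>phi x - c\<bar>)"
    using phi_0 k_le_1 by (intro range_eqI[of _ _ 0]) (simp add: abs_mult)
  show "\<bar>lam\<bar> * (1 - k) \<le> y" if y_range: "y \<in> range (\<lambda>x. \<bar>phi x - c\<bar>)" for y
  proof -
    obtain x where y: "y = \<bar>phi x - c\<bar>" using y_range by blast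
    have "k * cos (theta x) \<le> k" using k_pos cos_le_one[of "theta x"] by (simp add: mult_left_le)
    then show ?thesis unfolding y deviation by (intro mult_left_mono) auto
  qed
qed

lemma deviation_Sup: "Sup (range (\<lambda>x. \<bar>phi x - c\<bar>)) = \<bar>lam\<bar> * (1 + k)"
proof (rule cSup_eq_maximum)
  show "\<bar>lam\<bar> * (1 + k) \<in> range (\<lambda>x. \<bar>phi x - c\<bar>)"
    using phi_pi k_pos by (intro range_eqI[of _ _ "Xn pi"]) (simp add: abs_mult)
  show "y \<le> \<bar>lam\<bar> * (1 + k)" if y_range: "y \<in> range (\<lambda>x. \<bar>phi x - c\<bar>)" for y
  proof -
    obtain x where y: "y = \<bar>phi x - c\<bar>" using y_range by blast
    have "- k \<le> k * cos (theta x)"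
      using k_pos cos_ge_minus_one[of "theta x"] mult_left_mono[of "-1" "cos (theta x)" k] by simp
    then show ?thesis unfolding y deviation by (intro mult_left_mono) auto
  qed
qed

text \<open>For k < 1 the density h never vanishes, so phi is smooth everywhere.\<close>
lemma smooth_wave_phi: "k < 1 \<Longrightarrow> smooth_wave c phi"
proof -
  assume k: "k < 1"
  have "1 - k * cos t > 0" for t
    using k k_pos cos_le_one[of t] mult_left_le[of "cos t" k] by linarith
  then have "regular = UNIV" unfolding regular_def hfun_pos_iff by auto
  then have "smooth_on UNIV phi" unfolding smooth_on_iff_smooth_upto using phi_smooth by simp
  moreover have "phi 0 \<noteq> phi (Xn pi)" unfolding phi_0 phi_pi using lam_nonzero k_pos by simp
  ultimately show ?thesis unfolding smooth_wave_def using phi_traveling_wave by blast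
qed

end

section \<open>The cusped waves\<close>

lemma cot_half_at_right: "filterlim (\<lambda>t::real. sin t / (1 - cos t)) at_top (at_right 0)"
  by real_asymp

lemma cot_half_at_left: "filterlim (\<lambda>t::real. sin t / (1 - cos t)) at_bot (at_left 0)"
  by real_asymp

text \<open>For k = 1 the profile 1 - cos theta vanishes exactly at theta in 2 pi Z, i.e. (since
  theta 0 = 0 and theta (x + 1) = theta x + 2 pi) exactly at the integers.\<close>
locale cusp_wave = wave +
  assumes k_one: "k = 1"
begin

lemma beta_pos: "\<beta> > 0" using nondegenerate k_one by auto

lemma regular_eq: "regular = {x. phi x \<noteq> c}"
proof -
  have "x \<in> regular \<longleftrightarrow> phi x \<noteq> c" for x
    using profile_nonneg[of "theta x"] lam_nonzero
    unfolding regular_def hfun_pos_iff phi_def psi_def by auto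
  then show ?thesis by auto
qed

lemma phi_x_shift: "phi_x (t + real_of_int m) = phi_x t"
  unfolding phi_x_def w_def theta_int by (simp add: sin_add cos_add)

lemma theta_at_right: "filterlim theta (at_right 0) (at_right 0)"
proof -
  have "(theta \<longlongrightarrow> 0) (at_right 0)"
    using theta_cont[of 0] theta_0 unfolding isCont_def by (auto intro: tendsto_mono[OF at_le])
  moreover have "eventually (\<lambda>x. theta x \<in> {0<..} \<and> theta x \<noteq> 0) (at_right (0::real))"
    unfolding eventually_at_right_field using theta_strict[of 0] theta_0
    by (intro exI[of _ 1]) force
  ultimately show ?thesis unfolding filterlim_at by auto
qed

lemma theta_at_left: "filterlim theta (at_left 0) (at_left 0)"
proof -
  have "(theta \<longlongrightarrow> 0) (at_left 0)"
    using theta_cont[of 0] theta_0 unfolding isCont_def by (auto intro: tendsto_mono[OF at_le])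
  moreover have "eventually (\<lambda>x. theta x \<in> {..<0} \<and> theta x \<noteq> 0) (at_left (0::real))"
    unfolding eventually_at_left_field using theta_strict[of _ 0] theta_0
    by (intro exI[of _ "-1"]) force
  ultimately show ?thesis unfolding filterlim_at by auto
qed

text \<open>Near the integers phi_x is a nonvanishing continuous factor times cot (theta / 2).\<close>
lemma phi_x_cot_form: "phi_x t = (lam * P * w (theta t)) * (sin (theta t) / (1 - cos (theta t)))"
  unfolding phi_x_def using k_one by simp

lemma factor_limit: "((\<lambda>t. lam * P * w (theta t)) \<longlongrightarrow> lam * P * sqrt \<beta>) (at 0 within A)"
proof -
  have "((\<lambda>t. w (theta t)) \<longlongrightarrow> w (theta 0)) (at 0 within A)"
    using w_theta_cont[of 0] unfolding isCont_def by (auto intro: tendsto_mono[OF at_le])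
  moreover have "w (theta 0) = sqrt \<beta>" unfolding theta_0 w_def using k_one by simp
  ultimately show ?thesis by (auto intro: tendsto_intros)
qed

lemma phi_x_limits:
  shows "lam > 0 \<Longrightarrow> filterlim phi_x at_top (at_right 0) \<and> filterlim phi_x at_bot (at_left 0)"
    and "lam < 0 \<Longrightarrow> filterlim phi_x at_bot (at_right 0) \<and> filterlim phi_x at_top (at_left 0)"
proof -
  have right: "filterlim (\<lambda>t. sin (theta t) / (1 - cos (theta t))) at_top (at_right 0)"
    using filterlim_compose[OF cot_half_at_right theta_at_right] .
  have left: "filterlim (\<lambda>t. sin (theta t) / (1 - cos (theta t))) at_bot (at_left 0)"
    using filterlim_compose[OF cot_half_at_left theta_at_left] .
  have form: "phi_x = (\<lambda>t. (lam * P * w (theta t)) * (sin (theta t) / (1 - cos (theta t))))"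
    using phi_x_cot_form by auto
  have sqrt_beta: "sqrt \<beta> > 0" using beta_pos by simp
  show "filterlim phi_x at_top (at_right 0) \<and> filterlim phi_x at_bot (at_left 0)" if "lam > 0"
  proof -
    have "lam * P * sqrt \<beta> > 0" using that P_pos sqrt_beta by simp
    then show ?thesis unfolding form
      using filterlim_tendsto_pos_mult_at_top[OF factor_limit _ right]
        filterlim_tendsto_pos_mult_at_bot[OF factor_limit _ left] by blast
  qed
  show "filterlim phi_x at_bot (at_right 0) \<and> filterlim phi_x at_top (at_left 0)" if "lam < 0"
  proof -
    have neg: "lam * P * sqrt \<beta> < 0" using that P_pos sqrt_beta by (simp add: mult_neg_pos)
    have "filterlim (\<lambda>t. (lam * P * w (theta t)) * (sin (theta t) / (1 - cos (theta t)))) at_top (at_left 0)"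
      by (subst filterlim_tendsto_neg_mult_at_top_iff[OF factor_limit neg]) (rule left)
    then show ?thesis unfolding form
      using filterlim_tendsto_neg_mult_at_bot[OF factor_limit neg right] by blast
  qed
qed

lemma deriv_phi_near_singular:
  assumes x0: "x0 \<notin> regular"
  shows "eventually (\<lambda>t. deriv phi (t + x0) = phi_x t) (at_right 0)"
    and "eventually (\<lambda>t. deriv phi (t + x0) = phi_x t) (at_left 0)"
proof -
  obtain m where m: "x0 = real_of_int m" using nonregular_Ints[OF x0] Ints_cases by blast
  have near: "deriv phi (t + x0) = phi_x t" if "0 < \<bar>t\<bar>" "\<bar>t\<bar> < 1" for t
  proof -
    have "t + x0 \<in> regular"
    proof (rule ccontr)
      assume "t + x0 \<notin> regular"
      then have "t \<in> \<int>" using nonregular_Ints m by (metis Ints_diff Ints_of_int add_diff_cancel_right')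
      then obtain j where "t = real_of_int j" using Ints_cases by blast
      then show False using that by auto
    qed
    then have "deriv phi (t + x0) = phi_x (t + x0)" using phi_has_deriv by (simp add: DERIV_imp_deriv)
    then show ?thesis using phi_x_shift m by simp
  qed
  show "eventually (\<lambda>t. deriv phi (t + x0) = phi_x t) (at_right 0)"
    unfolding eventually_at_right_field using near by (intro exI[of _ 1]) auto
  show "eventually (\<lambda>t. deriv phi (t + x0) = phi_x t) (at_left 0)"
    unfolding eventually_at_left_field using near by (intro exI[of _ "-1"]) auto
qed

lemma cusp_at_phi:
  assumes x0: "phi x0 = c"
  shows "cusp_at phi x0"
proof -
  have x0_sing: "x0 \<notin> regular" using regular_eq x0 by auto
  have right: "filterlim (deriv phi) F (at_right x0) \<longleftrightarrow> filterlim phi_x F (at_right 0)" for F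
  proof -
    have "filterlim (deriv phi) F (at_right x0) \<longleftrightarrow> filterlim (\<lambda>t. deriv phi (t + x0)) F (at_right 0)"
      by (simp add: at_right_to_0[of x0] filterlim_filtermap)
    also have "\<dots> \<longleftrightarrow> filterlim phi_x F (at_right 0)"
      by (rule filterlim_cong[OF refl refl deriv_phi_near_singular(1)[OF x0_sing]])
    finally show ?thesis .
  qed
  have left: "filterlim (deriv phi) F (at_left x0) \<longleftrightarrow> filterlim phi_x F (at_left 0)" for F
  proof -
    have "filterlim (deriv phi) F (at_left x0) \<longleftrightarrow> filterlim (\<lambda>t. deriv phi (t + x0)) F (at_left 0)"
      by (simp add: at_left_to_0[of x0] filterlim_filtermap)
    also have "\<dots> \<longleftrightarrow> filterlim phi_x F (at_left 0)"
      by (rule filterlim_cong[OF refl refl deriv_phi_near_singular(2)[OF x0_sing]])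
    finally show ?thesis .
  qed
  have "lam > 0 \<or> lam < 0" using lam_nonzero by linarith
  then show ?thesis unfolding cusp_at_def right left using phi_x_limits by blast
qed

theorem cusped_wave_phi: "cusped_wave c phi"
proof -
  have "smooth_on {x. phi x \<noteq> c} phi"
    unfolding smooth_on_iff_smooth_upto using phi_smooth regular_eq by simp
  moreover have "phi 0 = c" using phi_0 k_one by simp
  ultimately show ?thesis unfolding cusped_wave_def using phi_traveling_wave cusp_at_phi by blast
qed

text \<open>Every level c + lam v with 0 <= v <= 2 is attained, and at levels v \<noteq> 0 the squared
  slope of phi is determined by lam, P and beta; this identifies beta.\<close>
lemma level_attained:
  assumes "0 \<le> v" "v \<le> 2"
  shows "phi (Xn (arccos (1 - v))) = c + lam * v"
proof -
  have "cos (theta (Xn (arccos (1 - v)))) = 1 - v" using assms by simp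
  then show ?thesis unfolding phi_def psi_def using k_one by simp
qed

lemma slope_at_level:
  assumes y: "phi y = c + lam * v" and v: "v \<noteq> 0"
  shows "phi differentiable at y"
    and "(deriv phi y)\<^sup>2 = lam\<^sup>2 * P\<^sup>2 * (1 - (1 - v)\<^sup>2) * (v + \<beta>) / v\<^sup>2"
proof -
  have co: "cos (theta y) = 1 - v" using y lam_nonzero k_one unfolding phi_def psi_def by simp
  have y_reg: "y \<in> regular" using regular_eq y v lam_nonzero by simp
  then show "phi differentiable at y" using phi_has_deriv real_differentiable_def by blast
  have "(sin (theta y))\<^sup>2 = 1 - (1 - v)\<^sup>2" using sin_cos_squared_add[of "theta y"] co by simp
  moreover have "(w (theta y))\<^sup>2 = v + \<beta>" using w_sq[of "theta y"] co k_one by simp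
  moreover have "(phi_x y)\<^sup>2 = lam\<^sup>2 * P\<^sup>2 * (sin (theta y))\<^sup>2 * (w (theta y))\<^sup>2 / v\<^sup>2"
    unfolding phi_x_def using co k_one by (simp add: power_mult_distrib power_divide)
  ultimately show "(deriv phi y)\<^sup>2 = lam\<^sup>2 * P\<^sup>2 * (1 - (1 - v)\<^sup>2) * (v + \<beta>) / v\<^sup>2"
    using DERIV_imp_deriv[OF phi_has_deriv[OF y_reg]] by simp
qed

end

section \<open>The two families\<close>

lemma one_param_familyI:
  fixes F :: "real \<Rightarrow> real \<Rightarrow> real"
  assumes "p < q" and "\<And>s. s \<in> {p<..<q} \<Longrightarrow> P (F s)"
    and "\<And>s t d. s \<in> {p<..<q} \<Longrightarrow> t \<in> {p<..<q} \<Longrightarrow> (\<And>x. F s x = F t (x + d)) \<Longrightarrow> s = t"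
  shows "one_param_family P"
  unfolding one_param_family_def using assms by blast

lemma range_translate: "range (\<lambda>x. f (x + d)) = range (f :: real \<Rightarrow> 'a)"
proof
  show "range f \<subseteq> range (\<lambda>x. f (x + d))"
  proof
    fix y assume "y \<in> range f"
    then obtain z where "y = f z" by blast
    then show "y \<in> range (\<lambda>x. f (x + d))" by (intro range_eqI[of _ _ "z - d"]) simp
  qed
qed auto

lemma deviation_range_translate:
  fixes f g :: "real \<Rightarrow> real"
  assumes "\<And>x. f x = g (x + d)"
  shows "range (\<lambda>x. \<bar>f x - c\<bar>) = range (\<lambda>x. \<bar>g x - c\<bar>)"
  using range_translate[of "\<lambda>x. \<bar>g x - c\<bar>" d] assms by simp

lemma deriv_translate:
  fixes f g :: "real \<Rightarrow> real"
  assumes "\<And>x. f x = g (x + d)" and "g differentiable at (y + d)"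
  shows "deriv f y = deriv g (y + d)"
proof -
  have "(g has_real_derivative deriv g (y + d)) (at (y + d))"
    using assms(2) by (simp add: DERIV_deriv_iff_real_differentiable)
  then have "((\<lambda>x. g (x + d)) has_real_derivative deriv g (y + d)) (at y)"
    using DERIV_shift by blast
  moreover have "f = (\<lambda>x. g (x + d))" using assms(1) by blast
  ultimately show ?thesis by (simp add: DERIV_imp_deriv)
qed

text \<open>Smooth waves: k ranges over (0, 1) with beta = 0; the extreme deviations
  |lam| (1 - k) and |lam| (1 + k) are translation invariant and determine k.\<close>
theorem smooth_family:
  assumes c: "c \<noteq> 0"
  shows "one_param_family (smooth_wave c)"
proof (rule one_param_familyI[where F = "\<lambda>k. wave.phi k 0 c"])
  have params: "wave k 0 c" if "k \<in> {0<..<1}" for k using that c by unfold_locales auto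
  show "smooth_wave c (wave.phi k 0 c)" if "k \<in> {0<..<1}" for k
    using wave.smooth_wave_phi[OF params[OF that]] that by simp
  show "s = t" if s: "s \<in> {0<..<1}" and t: "t \<in> {0<..<1}"
    and translate: "\<And>x. wave.phi s 0 c x = wave.phi t 0 c (x + d)" for s t d
  proof -
    interpret S: wave s 0 c using params[OF s] .
    interpret T: wave t 0 c using params[OF t] .
    have ranges: "range (\<lambda>x. \<bar>S.phi x - c\<bar>) = range (\<lambda>x. \<bar>T.phi x - c\<bar>)"
      using deviation_range_translate[where f = S.phi and g = T.phi, OF translate] .
    have "\<bar>S.lam\<bar> * (1 - s) = \<bar>T.lam\<bar> * (1 - t)"
      using S.deviation_Inf T.deviation_Inf ranges by simp
    moreover have "\<bar>S.lam\<bar> * (1 + s) = \<bar>T.lam\<bar> * (1 + t)"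
      using S.deviation_Sup T.deviation_Sup ranges by simp
    ultimately have "\<bar>S.lam\<bar> = \<bar>T.lam\<bar>" "\<bar>S.lam\<bar> * s = \<bar>T.lam\<bar> * t"
      by (simp_all add: algebra_simps)
    then show "s = t" using T.lam_nonzero by simp
  qed
qed simp

text \<open>Cusped waves: beta ranges over (0, 1) with k = 1.  The maximal deviation 2 |lam| and the
  sign of lam (opposite to that of c) determine lam; the slopes at two levels then determine
  P and beta.\<close>
theorem cusped_family:
  assumes c: "c \<noteq> 0"
  shows "one_param_family (cusped_wave c)"
proof (rule one_param_familyI[where F = "\<lambda>\<beta>. wave.phi 1 \<beta> c"])
  have params: "cusp_wave 1 \<beta> c" if "\<beta> \<in> {0<..<1}" for \<beta>
    using that c by unfold_locales auto
  show "cusped_wave c (wave.phi 1 \<beta> c)" if "\<beta> \<in> {0<..<1}" for \<beta>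
    using cusp_wave.cusped_wave_phi[OF params[OF that]] .
  show "s = t" if s: "s \<in> {0<..<1}" and t: "t \<in> {0<..<1}"
    and translate: "\<And>x. wave.phi 1 s c x = wave.phi 1 t c (x + d)" for s t d
  proof -
    interpret S: cusp_wave 1 s c using params[OF s] .
    interpret T: cusp_wave 1 t c using params[OF t] .
    have "\<bar>S.lam\<bar> * 2 = \<bar>T.lam\<bar> * 2"
      using S.deviation_Sup T.deviation_Sup deviation_range_translate[where f = S.phi and g = T.phi, OF translate]
      by simp
    moreover have "sgn S.lam = sgn T.lam" using S.sgn_lam T.sgn_lam by simp
    ultimately have lam: "S.lam = T.lam" by (metis sgn_mult_abs mult_right_cancel zero_neq_numeral)
    have slopes: "S.P\<^sup>2 * (v + s) = T.P\<^sup>2 * (v + t)" if v: "0 < v" "v < 2" for v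
    proof -
      define y where "y = S.Xn (arccos (1 - v))"
      have Sy: "S.phi y = c + S.lam * v" unfolding y_def using S.level_attained v by simp
      then have Ty: "T.phi (y + d) = c + T.lam * v" using translate lam by simp
      have "(deriv S.phi y)\<^sup>2 = (deriv T.phi (y + d))\<^sup>2"
        using deriv_translate[where f = S.phi and g = T.phi, OF translate T.slope_at_level(1)[OF Ty]] v by simp
      then have "K * (S.P\<^sup>2 * (v + s)) = K * (T.P\<^sup>2 * (v + t))"
        if "K = T.lam\<^sup>2 * (1 - (1 - v)\<^sup>2) / v\<^sup>2" for K
        using S.slope_at_level(2)[OF Sy] T.slope_at_level(2)[OF Ty] v lam unfolding that
        by (simp add: ac_simps)
      moreover have "T.lam\<^sup>2 * (1 - (1 - v)\<^sup>2) / v\<^sup>2 \<noteq> 0"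
        using v T.lam_nonzero by (simp add: power2_eq_square algebra_simps)
      ultimately show ?thesis by auto
    qed
    have level_1: "S.P\<^sup>2 + S.P\<^sup>2 * s = T.P\<^sup>2 + T.P\<^sup>2 * t"
      and level_half: "S.P\<^sup>2 / 2 + S.P\<^sup>2 * s = T.P\<^sup>2 / 2 + T.P\<^sup>2 * t"
      using slopes[of 1] slopes[of "1/2"] by (simp_all add: algebra_simps)
    then have "S.P\<^sup>2 = T.P\<^sup>2" by linarith
    then have "S.P\<^sup>2 * s = S.P\<^sup>2 * t" using level_1 by simp
    then show "s = t" using S.P_pos by simp
  qed
qed simp

theorem theorem6p3:
  fixes c :: real
  assumes "c \<noteq> 0"
  shows "one_param_family (smooth_wave c) \<and> one_param_family (cusped_wave c)"
  using smooth_family[OF assms] cusped_family[OF assms] by blast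

end
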